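(* Let $\mathbf T$ be a countably infinite homogeneous tournament and $\mathbf T^*$ an expansion of $\mathbf T$ as in the context such that $\mathrm{Age}(\mathbf T^* )$ has the Ramsey property. Then $\mathrm{Age}(\mathbf T[I_\omega]^* )$ has the Ramsey property.
   Context: For relational structures $\mathbf A,\mathbf B$ in the same language, $\binom{\mathbf B}{\mathbf A}$ denotes the set of substructures of $\mathbf B$ isomorphic to $\mathbf A$. For $k\ge 1$, $\mathbf C\to(\mathbf B)^{\mathbf A}_k$ means: for every map $c:\binom{\mathbf C}{\mathbf A}\to[k]=\{0,\dots,k-1\}$ there is $\mathbf B'\in\binom{\mathbf C}{\mathbf B}$ such that $c$ is constant on $\binom{\mathbf B'}{\mathbf A}$. A class $\mathcal K$ of finite structures has the Ramsey property if for all $k\ge1$ and all $\mathbf A,\mathbf B\in\mathcal K$ there is $\mathbf C\in\mathcal K$ with $\mathbf C\to(\mathbf B)^{\mathbf A}_k$. The age $\mathrm{Age}(\mathbf F)$ of a structure $\mathbf F$ is the class of finite structures embeddable in $\mathbf F$. A tournament is a directed graph in which every pair of distinct vertices carries exactly one directed edge; it is homogeneous if every isomorphism between finite substructures extends to an automorphism. $\mathbf T=(T,E^{\mathbf T})$ is a countable homogeneous tournament, and $\mathbf T^*$ is an expansion of $\mathbf T$ to a countable relational language $L_{\mathbf T^*}\supseteq\{E,<\}$ in which $<$ is interpreted as a linear order $<^*$ on $T$. Fix a linear order $\prec$ on $\mathbb N$ with $(\mathbb N,\prec)\cong(\mathbb Q,<)$. The structure $\mathbf T[I_\omega]^*$ has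 universe $T\times\mathbb N$ and language $L_{\mathbf T^*}$, interpreted as: $E((x,i),(y,j))$ iff $E^{\mathbf T}(x,y)$; for each $m$-ary $R\in L_{\mathbf T^*}\setminus\{E,<\}$, $R((x_1,i_1),\dots,(x_m,i_m))$ iff $R^{\mathbf T^*}(x_1,\dots,x_m)$; $(x,i)<(y,j)$ iff $x<^*y$, or $x=y$ and $i\prec j$. *)

theory Defs
  imports Complex_Main "HOL-Library.Countable_Set"
begin

text \<open>A relational structure in a language whose symbols are the elements of type 'l
  (with arity function ar): a universe together with, for each symbol R, the set of
  tuples (lists of length ar R) on which R holds.\<close>
type_synonym ('l, 'a) str = "'a set \<times> ('l \<Rightarrow> 'a list set)"

definition wf_str :: "('l \<Rightarrow> nat) \<Rightarrow> ('l, 'a) str \<Rightarrow> bool" where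
  "wf_str ar A \<longleftrightarrow> (\<forall>R. \<forall>t \<in> snd A R. length t = ar R \<and> set t \<subseteq> fst A)"

definition induced :: "('l, 'a) str \<Rightarrow> 'a set \<Rightarrow> ('l, 'a) str" where
  "induced A S = (S, \<lambda>R. {t \<in> snd A R. set t \<subseteq> S})"

definition is_embedding ::
  "('l \<Rightarrow> nat) \<Rightarrow> ('a \<Rightarrow> 'b) \<Rightarrow> ('l, 'a) str \<Rightarrow> ('l, 'b) str \<Rightarrow> bool" where
  "is_embedding ar f A B \<longleftrightarrow> inj_on f (fst A) \<and> f ` fst A \<subseteq> fst B \<and>
     (\<forall>R t. length t = ar R \<and> set t \<subseteq> fst A \<longrightarrow> (t \<in> snd A R \<longleftrightarrow> map f t \<in> snd B R))"

definition isomorphic :: "('l \<Rightarrow> nat) \<Rightarrow> ('l, 'a) str \<Rightarrow> ('l, 'b) str \<Rightarrow> bool" where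
  "isomorphic ar A B \<longleftrightarrow> (\<exists>f. is_embedding ar f A B \<and> f ` fst A = fst B)"

text \<open>binom C A: substructures of C isomorphic to A (a substructure is identified with its
  universe, the relations being induced).\<close>
definition copies :: "('l \<Rightarrow> nat) \<Rightarrow> ('l, 'a) str \<Rightarrow> ('l, 'b) str \<Rightarrow> 'a set set" where
  "copies ar C A = {S. S \<subseteq> fst C \<and> isomorphic ar A (induced C S)}"

definition arrows ::
  "('l \<Rightarrow> nat) \<Rightarrow> ('l, 'a) str \<Rightarrow> ('l, 'b) str \<Rightarrow> ('l, 'c) str \<Rightarrow> nat \<Rightarrow> bool" where
  "arrows ar C B A k \<longleftrightarrow>
     (\<forall>c :: 'a set \<Rightarrow> nat. (\<forall>S \<in> copies ar C A. c S < k) \<longrightarrow>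
        (\<exists>B' \<in> copies ar C B. \<exists>i. \<forall>S \<in> copies ar (induced C B') A. c S = i))"

text \<open>Classes of finite structures are represented by structures carried by subsets of nat
  (every finite structure has an isomorphic copy of this form).\<close>
definition ramsey_class :: "('l \<Rightarrow> nat) \<Rightarrow> ('l, nat) str set \<Rightarrow> bool" where
  "ramsey_class ar K \<longleftrightarrow>
     (\<forall>k\<ge>1. \<forall>A\<in>K. \<forall>B\<in>K. \<exists>C\<in>K. arrows ar C B A k)"

definition age :: "('l \<Rightarrow> nat) \<Rightarrow> ('l, 'a) str \<Rightarrow> ('l, nat) str set" where
  "age ar F = {A. wf_str ar A \<and> finite (fst A) \<and> (\<exists>f. is_embedding ar f A F)}"

definition tournament :: "'a set \<Rightarrow> ('a \<Rightarrow> 'a \<Rightarrow> bool) \<Rightarrow> bool" where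
  "tournament T E \<longleftrightarrow> (\<forall>x\<in>T. \<forall>y\<in>T. x \<noteq> y \<longrightarrow> (E x y \<longleftrightarrow> \<not> E y x)) \<and> (\<forall>x\<in>T. \<not> E x x)"

definition homogeneous_digraph :: "'a set \<Rightarrow> ('a \<Rightarrow> 'a \<Rightarrow> bool) \<Rightarrow> bool" where
  "homogeneous_digraph T E \<longleftrightarrow>
     (\<forall>S f. S \<subseteq> T \<and> finite S \<and> inj_on f S \<and> f ` S \<subseteq> T \<and>
        (\<forall>x\<in>S. \<forall>y\<in>S. E x y \<longleftrightarrow> E (f x) (f y)) \<longrightarrow>
        (\<exists>g. bij_betw g T T \<and> (\<forall>x\<in>T. \<forall>y\<in>T. E x y \<longleftrightarrow> E (g x) (g y)) \<and>
             (\<forall>x\<in>S. g x = f x)))"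

definition strict_linear_order_on :: "'a set \<Rightarrow> ('a \<Rightarrow> 'a \<Rightarrow> bool) \<Rightarrow> bool" where
  "strict_linear_order_on T lt \<longleftrightarrow>
     (\<forall>x\<in>T. \<not> lt x x) \<and>
     (\<forall>x\<in>T. \<forall>y\<in>T. \<forall>z\<in>T. lt x y \<and> lt y z \<longrightarrow> lt x z) \<and>
     (\<forall>x\<in>T. \<forall>y\<in>T. x \<noteq> y \<longrightarrow> lt x y \<or> lt y x)"

definition blowup ::
  "'l \<Rightarrow> 'l \<Rightarrow> (nat \<Rightarrow> nat \<Rightarrow> bool) \<Rightarrow> ('l, 'a) str \<Rightarrow> ('l, 'a \<times> nat) str" where
  "blowup Esym Ltsym prec Ts =
     (fst Ts \<times> UNIV,
      \<lambda>R. if R = Esym then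
            {[(x,i),(y,j)] | x i y j. x \<in> fst Ts \<and> y \<in> fst Ts \<and> [x,y] \<in> snd Ts Esym}
          else if R = Ltsym then
            {[(x,i),(y,j)] | x i y j. x \<in> fst Ts \<and> y \<in> fst Ts \<and>
               ([x,y] \<in> snd Ts Ltsym \<or> (x = y \<and> prec i j))}
          else {t. set t \<subseteq> fst Ts \<times> UNIV \<and> map fst t \<in> snd Ts R})"

end

theory Submission
  imports Defs "HOL-Library.Ramsey"
begin

text \<open>Let A, B be finite substructures of the blow-up. Their projections to T have a Ramsey
  witness C in T, and C \<times> {..<N} is a witness for A and B when N comes from the finite Ramsey
  theorem. The blocks {x} \<times> \<nat> are visible in the blow-up, since the tournament puts an edge
  between any two distinct points, and the linear order makes isomorphisms between finite
  substructures unique. Hence a copy of A inside a copy of B whose order agrees with the order of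
  the indices is determined by its projection q, a copy in C of the projection of A, and its set U
  of indices, an |A|-subset of {..<N}; so a colouring of the copies of A is a colouring of the
  pairs (q, U). The finite Ramsey theorem gives a set H of |B| indices on which the colour depends
  on q only, the Ramsey property of T a copy of the projection of B on which it is constant, and
  spreading B over that copy and H yields a monochromatic copy of B.\<close>

section \<open>Embeddings, copies and arrows\<close>

lemma fst_induced [simp]: "fst (induced C S) = S"
  unfolding induced_def by simp

lemma snd_induced: "snd (induced C S) R = {t \<in> snd C R. set t \<subseteq> S}"
  unfolding induced_def by simp

lemma induced_induced: "S \<subseteq> W \<Longrightarrow> induced (induced C W) S = induced C S"
  unfolding induced_def by auto

lemma is_embedding_rel:
  "is_embedding ar f A B \<Longrightarrow> length t = ar R \<Longrightarrow> set t \<subseteq> fst A \<Longrightarrow>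
    t \<in> snd A R \<longleftrightarrow> map f t \<in> snd B R"
  by (simp add: is_embedding_def)

lemma is_embedding_inj_on: "is_embedding ar f A B \<Longrightarrow> inj_on f (fst A)"
  by (simp add: is_embedding_def)

lemma is_embedding_image_subset: "is_embedding ar f A B \<Longrightarrow> f ` fst A \<subseteq> fst B"
  unfolding is_embedding_def by blast

lemma is_embedding_comp:
  assumes f: "is_embedding ar f A B" and g: "is_embedding ar g B C"
  shows "is_embedding ar (g \<circ> f) A C"
  unfolding is_embedding_def
proof (intro conjI allI impI)
  show "inj_on (g \<circ> f) (fst A)"
    using f g unfolding is_embedding_def by (meson comp_inj_on inj_on_subset)
  show "(g \<circ> f) ` fst A \<subseteq> fst C"
    using f g unfolding is_embedding_def by (auto simp: image_subset_iff)
  fix R t assume t: "length t = ar R \<and> set t \<subseteq> fst A"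
  have "set (map f t) \<subseteq> fst B" using f t unfolding is_embedding_def by auto
  then show "t \<in> snd A R \<longleftrightarrow> map (g \<circ> f) t \<in> snd C R"
    using is_embedding_rel[OF f] is_embedding_rel[OF g] t by simp
qed

lemma is_embedding_the_inv_into:
  assumes f: "is_embedding ar f A B" and onto: "f ` fst A = fst B"
  shows "is_embedding ar (the_inv_into (fst A) f) B A"
  unfolding is_embedding_def
proof (intro conjI allI impI)
  let ?g = "the_inv_into (fst A) f"
  have inj: "inj_on f (fst A)" using is_embedding_inj_on[OF f] .
  show "inj_on ?g (fst B)" unfolding onto[symmetric] using inj_on_the_inv_into[OF inj] .
  show "?g ` fst B \<subseteq> fst A" unfolding onto[symmetric] using the_inv_into_onto[OF inj] by simp
  have g: "?g y \<in> fst A" "f (?g y) = y" if "y \<in> fst B" for y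
    using the_inv_into_into[OF inj _ subset_refl] f_the_inv_into_f[OF inj] that onto by auto
  fix R t assume t: "length t = ar R \<and> set t \<subseteq> fst B"
  have "map f (map ?g t) = t"
    unfolding map_map by (rule map_idI) (use t g in auto)
  moreover have "set (map ?g t) \<subseteq> fst A" using t g by auto
  ultimately show "t \<in> snd B R \<longleftrightarrow> map ?g t \<in> snd A R"
    using is_embedding_rel[OF f, of "map ?g t" R] t by simp
qed

lemma isomorphic_trans: "isomorphic ar A B \<Longrightarrow> isomorphic ar B C \<Longrightarrow> isomorphic ar A C"
  unfolding isomorphic_def by (metis is_embedding_comp image_comp)

lemma isomorphic_sym: "isomorphic ar A B \<Longrightarrow> isomorphic ar B A"
  unfolding isomorphic_def
  by (metis is_embedding_the_inv_into is_embedding_inj_on the_inv_into_onto)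

definition some_iso :: "('l \<Rightarrow> nat) \<Rightarrow> ('l, 'a) str \<Rightarrow> ('l, 'b) str \<Rightarrow> 'a \<Rightarrow> 'b" where
  "some_iso ar A B = (SOME f. is_embedding ar f A B \<and> f ` fst A = fst B)"

lemma some_iso:
  assumes "isomorphic ar A B"
  shows "is_embedding ar (some_iso ar A B) A B \<and> some_iso ar A B ` fst A = fst B"
  using assms unfolding isomorphic_def some_iso_def by (rule someI_ex)

lemma is_embedding_induced_intro:
  assumes "inj_on f P" "f ` P \<subseteq> Q"
    and "\<And>R t. length t = ar R \<Longrightarrow> set t \<subseteq> P \<Longrightarrow> t \<in> snd F R \<longleftrightarrow> map f t \<in> snd G R"
  shows "is_embedding ar f (induced F P) (induced G Q)"
  unfolding is_embedding_def
proof (intro conjI allI impI)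
  show "inj_on f (fst (induced F P))" "f ` fst (induced F P) \<subseteq> fst (induced G Q)"
    using assms(1,2) by simp_all
  fix R t assume t: "length t = ar R \<and> set t \<subseteq> fst (induced F P)"
  then have "set (map f t) \<subseteq> Q" using assms(2) by auto
  then show "t \<in> snd (induced F P) R \<longleftrightarrow> map f t \<in> snd (induced G Q) R"
    using t assms(3)[of t R] by (simp add: snd_induced)
qed

lemma is_embedding_restrict:
  assumes f: "is_embedding ar f A B" and S: "S \<subseteq> fst A"
  shows "is_embedding ar f (induced A S) (induced B (f ` S))"
  using S is_embedding_inj_on[OF f] is_embedding_rel[OF f]
  by (intro is_embedding_induced_intro) (auto intro: inj_on_subset)

lemma isomorphic_image:
  assumes f: "is_embedding ar f A B"
  shows "isomorphic ar A (induced B (f ` fst A))"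
proof -
  have "is_embedding ar f A (induced B (f ` fst A))"
    using f unfolding is_embedding_def by (auto simp: snd_induced)
  then show ?thesis unfolding isomorphic_def by auto
qed

lemma induced_embedding_rel:
  assumes f: "is_embedding ar f (induced F P) (induced F Q)"
    and t: "length t = ar R" "set t \<subseteq> P"
  shows "t \<in> snd F R \<longleftrightarrow> map f t \<in> snd F R"
proof -
  have "set (map f t) \<subseteq> Q" using f t(2) unfolding is_embedding_def by auto
  then show ?thesis using is_embedding_rel[OF f t(1)] t(2) by (simp add: snd_induced)
qed

lemma age_representative:
  assumes F: "wf_str ar F" and S: "finite S" "S \<subseteq> fst F"
  shows "\<exists>D \<in> age ar F. isomorphic ar D (induced F S)"
proof -
  obtain g where g: "bij_betw g {..<card S} S"
    using ex_bij_betw_nat_finite S(1) atLeast0LessThan by metis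
  define D where "D = ({..<card S},
    \<lambda>R. {t. length t = ar R \<and> set t \<subseteq> {..<card S} \<and> map g t \<in> snd F R})"
  have ginj: "inj_on g {..<card S}" and gim: "g ` {..<card S} = S"
    using g unfolding bij_betw_def by auto
  have emb: "is_embedding ar g D (induced F S)"
    unfolding is_embedding_def D_def using ginj gim by (auto simp: snd_induced)
  have "is_embedding ar g D F"
    using emb S(2) unfolding is_embedding_def induced_def by (auto simp: image_subset_iff subset_iff)
  then have "D \<in> age ar F" unfolding age_def wf_str_def D_def by auto
  moreover have "isomorphic ar D (induced F S)"
    using emb gim unfolding isomorphic_def D_def by auto
  ultimately show ?thesis by blast
qed

lemma age_isomorphic_induced:
  assumes "A \<in> age ar F"
  obtains S where "S \<subseteq> fst F" "finite S" "isomorphic ar A (induced F S)"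
proof -
  obtain f where f: "is_embedding ar f A F" and fin: "finite (fst A)"
    using assms unfolding age_def by blast
  have "f ` fst A \<subseteq> fst F" using f unfolding is_embedding_def by simp
  then show ?thesis using that fin isomorphic_image[OF f] by blast
qed

lemma copies_induced:
  "W \<subseteq> fst C \<Longrightarrow> copies ar (induced C W) A = {S. S \<subseteq> W \<and> isomorphic ar A (induced C S)}"
  unfolding copies_def by (auto simp: induced_induced)

lemma copies_isomorphic_cong: "isomorphic ar A A' \<Longrightarrow> copies ar C A = copies ar C A'"
  unfolding copies_def by (metis isomorphic_trans isomorphic_sym)

lemma image_in_copies:
  assumes h: "is_embedding ar h C0 C1" and S: "S \<in> copies ar C0 X"
  shows "h ` S \<in> copies ar C1 X"
proof -
  have S0: "S \<subseteq> fst C0" "isomorphic ar X (induced C0 S)" using S unfolding copies_def by auto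
  have "isomorphic ar (induced C0 S) (induced C1 (h ` S))"
    using is_embedding_restrict[OF h S0(1)] unfolding isomorphic_def by auto
  moreover have "h ` S \<subseteq> fst C1" using h S0(1) unfolding is_embedding_def by auto
  ultimately show ?thesis using S0(2) isomorphic_trans unfolding copies_def by blast
qed

lemma arrowsE:
  assumes "arrows ar C B A k" "\<forall>S\<in>copies ar C A. c S < k"
  obtains B' i where "B' \<in> copies ar C B" "\<forall>S\<in>copies ar (induced C B') A. c S = i"
  using assms unfolding arrows_def by blast

lemma arrows_isomorphic:
  assumes iso: "isomorphic ar C0 C1" and arr: "arrows ar C0 B A k"
  shows "arrows ar C1 B A k"
  unfolding arrows_def
proof (intro allI impI)
  obtain h where h: "is_embedding ar h C0 C1" "h ` fst C0 = fst C1"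
    using iso unfolding isomorphic_def by blast
  fix c1 :: "'c set \<Rightarrow> nat"
  assume col: "\<forall>S\<in>copies ar C1 A. c1 S < k"
  define c0 where "c0 S = c1 (h ` S)" for S
  have "\<forall>S\<in>copies ar C0 A. c0 S < k" using col image_in_copies[OF h(1)] unfolding c0_def by blast
  then obtain B0 i where B0: "B0 \<in> copies ar C0 B"
    and hom: "\<forall>S\<in>copies ar (induced C0 B0) A. c0 S = i"
    by (rule arrowsE[OF arr])
  have B0sub: "B0 \<subseteq> fst C0" using B0 unfolding copies_def by auto
  have hB0: "h ` B0 \<subseteq> fst C1" using B0sub h(2) by auto
  show "\<exists>B'\<in>copies ar C1 B. \<exists>i. \<forall>S\<in>copies ar (induced C1 B') A. c1 S = i"
  proof (intro bexI exI ballI)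
    show "h ` B0 \<in> copies ar C1 B" using image_in_copies[OF h(1) B0] .
    fix S1 assume "S1 \<in> copies ar (induced C1 (h ` B0)) A"
    then have S1: "S1 \<subseteq> h ` B0" "isomorphic ar A (induced C1 S1)"
      unfolding copies_induced[OF hB0] by auto
    define S where "S = {x \<in> B0. h x \<in> S1}"
    have hS: "h ` S = S1" using S1(1) unfolding S_def by auto
    have SB0: "S \<subseteq> B0" unfolding S_def by auto
    have "is_embedding ar h (induced C0 S) (induced C1 (h ` S))"
      using is_embedding_restrict[OF h(1)] SB0 B0sub by blast
    then have "isomorphic ar (induced C0 S) (induced C1 S1)" unfolding isomorphic_def using hS by auto
    then have "isomorphic ar A (induced C0 S)" using S1(2) isomorphic_trans isomorphic_sym by blast
    then have "S \<in> copies ar (induced C0 B0) A" unfolding copies_induced[OF B0sub] using SB0 by blast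
    then show "c1 S1 = i" using hom hS unfolding c0_def by blast
  qed
qed

lemma arrows_isomorphic_patterns:
  assumes "isomorphic ar A A'" "isomorphic ar B B'" "arrows ar C B A k"
  shows "arrows ar C B' A' k"
  using assms(3) copies_isomorphic_cong[OF assms(1)] copies_isomorphic_cong[OF assms(2)]
  unfolding arrows_def by metis

section \<open>Ranks in finite linear orders\<close>

definition rank :: "('b \<Rightarrow> 'b \<Rightarrow> bool) \<Rightarrow> 'b set \<Rightarrow> 'b \<Rightarrow> nat" where
  "rank lt U x = card {y \<in> U. lt y x}"

definition ord_nth :: "('b \<Rightarrow> 'b \<Rightarrow> bool) \<Rightarrow> 'b set \<Rightarrow> nat \<Rightarrow> 'b" where
  "ord_nth lt U t = (THE x. x \<in> U \<and> rank lt U x = t)"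

lemma strict_linear_order_on_subset:
  "strict_linear_order_on Z lt \<Longrightarrow> U \<subseteq> Z \<Longrightarrow> strict_linear_order_on U lt"
  unfolding strict_linear_order_on_def by blast

lemma strict_linear_order_on_irrefl: "strict_linear_order_on U lt \<Longrightarrow> x \<in> U \<Longrightarrow> \<not> lt x x"
  unfolding strict_linear_order_on_def by blast

lemma strict_linear_order_on_trans:
  "strict_linear_order_on U lt \<Longrightarrow> x \<in> U \<Longrightarrow> y \<in> U \<Longrightarrow> z \<in> U \<Longrightarrow> lt x y \<Longrightarrow> lt y z \<Longrightarrow> lt x z"
  unfolding strict_linear_order_on_def by blast

lemma strict_linear_order_on_cases:
  assumes "strict_linear_order_on U lt" "x \<in> U" "y \<in> U"
  obtains "lt x y" | "x = y" | "lt y x"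
  using assms unfolding strict_linear_order_on_def by blast

lemma strict_linear_order_on_mono_iff:
  assumes lt: "strict_linear_order_on U lt" and lt': "strict_linear_order_on V lt'"
    and f: "f ` U \<subseteq> V" and mono: "\<And>x y. x \<in> U \<Longrightarrow> y \<in> U \<Longrightarrow> lt x y \<Longrightarrow> lt' (f x) (f y)"
    and xy: "x \<in> U" "y \<in> U"
  shows "lt' (f x) (f y) \<longleftrightarrow> lt x y"
proof
  assume fxy: "lt' (f x) (f y)"
  have fx: "f x \<in> V" "f y \<in> V" using f xy by auto
  show "lt x y"
  proof (cases rule: strict_linear_order_on_cases[OF lt xy])
    case 2
    then show ?thesis using fxy strict_linear_order_on_irrefl[OF lt' fx(1)] by simp
  next
    case 3
    then have "lt' (f x) (f x)"
      using strict_linear_order_on_trans[OF lt' fx(1,2,1) fxy] mono[OF xy(2,1)] by blast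
    then show ?thesis using strict_linear_order_on_irrefl[OF lt' fx(1)] by simp
  qed
qed (rule mono[OF xy])

context
  fixes lt :: "'b \<Rightarrow> 'b \<Rightarrow> bool" and U :: "'b set"
  assumes lin: "strict_linear_order_on U lt" and fin: "finite U"
begin

lemma rank_less_rank:
  assumes xy: "x \<in> U" "y \<in> U" "lt x y"
  shows "rank lt U x < rank lt U y"
  unfolding rank_def
proof (rule psubset_card_mono)
  show "finite {z \<in> U. lt z y}" using fin by simp
  have "lt z y" if "z \<in> U" "lt z x" for z
    using strict_linear_order_on_trans[OF lin that(1) xy(1,2) that(2) xy(3)] .
  then show "{z \<in> U. lt z x} \<subset> {z \<in> U. lt z y}"
    using xy strict_linear_order_on_irrefl[OF lin xy(1)] by auto
qed

lemma rank_less_iff: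
  assumes xy: "x \<in> U" "y \<in> U"
  shows "rank lt U x < rank lt U y \<longleftrightarrow> lt x y"
  using strict_linear_order_on_cases[OF lin xy] rank_less_rank[OF xy] rank_less_rank[OF xy(2,1)]
  by (metis less_asym)

lemma inj_on_rank: "inj_on (rank lt U) U"
proof (rule inj_onI)
  fix x y assume xy: "x \<in> U" "y \<in> U" and eq: "rank lt U x = rank lt U y"
  show "x = y"
    using strict_linear_order_on_cases[OF lin xy] rank_less_rank[OF xy] rank_less_rank[OF xy(2,1)] eq
    by (metis less_irrefl)
qed

lemma rank_less_card: "x \<in> U \<Longrightarrow> rank lt U x < card U"
  unfolding rank_def
  by (rule psubset_card_mono[OF fin]) (use strict_linear_order_on_irrefl[OF lin] in blast)

lemma rank_image: "rank lt U ` U = {..<card U}"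
proof -
  have "rank lt U ` U \<subseteq> {..<card U}" using rank_less_card by auto
  moreover have "card (rank lt U ` U) = card {..<card U}" using card_image[OF inj_on_rank] by simp
  ultimately show ?thesis using card_subset_eq[OF finite_lessThan] by blast
qed

lemma ord_nth_in: "t < card U \<Longrightarrow> ord_nth lt U t \<in> U"
  and rank_ord_nth: "t < card U \<Longrightarrow> rank lt U (ord_nth lt U t) = t"
proof -
  assume "t < card U"
  then have "t \<in> rank lt U ` U" using rank_image by simp
  then obtain x where x: "x \<in> U" "rank lt U x = t" by blast
  then have "ord_nth lt U t = x"
    unfolding ord_nth_def using inj_onD[OF inj_on_rank] by (intro the_equality) auto
  with x show "ord_nth lt U t \<in> U" "rank lt U (ord_nth lt U t) = t" by simp_all
qed

lemma ord_nth_rank: "x \<in> U \<Longrightarrow> ord_nth lt U (rank lt U x) = x"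
  using ord_nth_in[OF rank_less_card] rank_ord_nth[OF rank_less_card] inj_onD[OF inj_on_rank] by blast

lemma ord_nth_less_iff:
  "s < card U \<Longrightarrow> t < card U \<Longrightarrow> lt (ord_nth lt U s) (ord_nth lt U t) \<longleftrightarrow> s < t"
  using rank_less_iff[OF ord_nth_in ord_nth_in] rank_ord_nth by simp

end

lemma rank_image_eq:
  assumes f: "inj_on f U" and x: "x \<in> U"
    and pres: "\<And>y. y \<in> U \<Longrightarrow> lt y x \<longleftrightarrow> lt' (f y) (f x)"
  shows "rank lt' (f ` U) (f x) = rank lt U x"
proof -
  have "{y \<in> f ` U. lt' y (f x)} = f ` {y \<in> U. lt y x}" using pres by auto
  moreover have "inj_on f {y \<in> U. lt y x}" using f by (rule inj_on_subset) auto
  ultimately show ?thesis unfolding rank_def by (simp add: card_image)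
qed

text \<open>Isomorphisms preserve ranks with respect to the linear order, so they are unique.\<close>

lemma induced_isomorphism_unique:
  assumes lin: "strict_linear_order_on (fst F) (\<lambda>x y. [x, y] \<in> snd F R)" and ar: "ar R = 2"
    and P: "P \<subseteq> fst F" "finite P" and Q: "Q \<subseteq> fst F"
    and f: "is_embedding ar f (induced F P) (induced F Q)" "f ` P = Q"
    and g: "is_embedding ar g (induced F P) (induced F Q)" "g ` P = Q"
    and x: "x \<in> P"
  shows "f x = g x"
proof -
  let ?lt = "\<lambda>x y. [x, y] \<in> snd F R"
  have rank_eq: "rank ?lt Q (h x) = rank ?lt P x"
    if h: "is_embedding ar h (induced F P) (induced F Q)" "h ` P = Q" for h
  proof -
    have inj: "inj_on h P" using is_embedding_inj_on[OF h(1)] by simp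
    have "?lt y x \<longleftrightarrow> ?lt (h y) (h x)" if "y \<in> P" for y
      using induced_embedding_rel[OF h(1), of "[y, x]" R] ar that x by simp
    then have "rank ?lt (h ` P) (h x) = rank ?lt P x" by (rule rank_image_eq[OF inj x])
    then show ?thesis using h(2) by simp
  qed
  have "finite Q" using f(2) P(2) by blast
  then have "inj_on (rank ?lt Q) Q" by (rule inj_on_rank[OF strict_linear_order_on_subset[OF lin Q]])
  moreover have "f x \<in> Q" "g x \<in> Q" using f(2) g(2) x by auto
  moreover have "rank ?lt Q (f x) = rank ?lt Q (g x)" using rank_eq[OF f] rank_eq[OF g] by simp
  ultimately show ?thesis by (simp add: inj_on_eq_iff)
qed

section \<open>Ramsey's theorem with a finite parameter\<close>

lemma ramsey_finite_colour_set:
  assumes V: "finite V"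
  obtains N :: nat where
    "\<And>v. v \<in> nsets {..<N} r \<rightarrow> V \<Longrightarrow> \<exists>H\<in>nsets {..<N} b. \<forall>U\<in>nsets H r. \<forall>U'\<in>nsets H r. v U = v U'"
proof -
  obtain N :: nat where N: "partn_lst {..<N} (replicate (card V) b) r"
    using ramsey_full by blast
  have "\<exists>H\<in>nsets {..<N} b. \<forall>U\<in>nsets H r. \<forall>U'\<in>nsets H r. v U = v U'"
    if v: "v \<in> nsets {..<N} r \<rightarrow> V" for v
  proof -
    have "to_nat_on V (v U) < card V" if "U \<in> nsets {..<N} r" for U
    proof -
      have "v U \<in> V" using v that by auto
      then show ?thesis using to_nat_on_finite[OF V] unfolding bij_betw_def by auto
    qed
    then have "to_nat_on V \<circ> v \<in> nsets {..<N} r \<rightarrow> {..<card V}" by simp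
    then obtain i H where "i < length (replicate (card V) b)"
      and "H \<in> nsets {..<N} (replicate (card V) b ! i)"
      and mono: "(to_nat_on V \<circ> v) ` nsets H r \<subseteq> {i}"
      using partn_lstE[OF N _ length_replicate] by blast
    then have H: "H \<in> nsets {..<N} b" by simp
    have sub: "nsets H r \<subseteq> nsets {..<N} r" by (rule nsets_mono) (use H in \<open>simp add: nsets_def\<close>)
    have "v U = v U'" if "U \<in> nsets H r" "U' \<in> nsets H r" for U U'
    proof -
      have "v U \<in> V" "v U' \<in> V" using v sub that by auto
      moreover have "to_nat_on V (v U) = to_nat_on V (v U')" using mono that by auto
      ultimately show ?thesis using inj_on_to_nat_on[OF countable_finite[OF V]] by (auto dest: inj_onD)
    qed
    with H show ?thesis by blast
  qed
  then show ?thesis by (rule that)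
qed

text \<open>Colour each r-set U by the vector of its colours f q U, q \<in> Q.\<close>

lemma finite_ramsey_parametrised:
  fixes k :: nat
  assumes Q: "finite Q" and k: "0 < k"
  obtains N :: nat where
    "\<And>f. \<forall>q\<in>Q. \<forall>U\<in>nsets {..<N} r. f q U < k \<Longrightarrow>
      \<exists>H\<in>nsets {..<N} b. \<exists>g\<in>Q \<rightarrow> {..<k}. \<forall>q\<in>Q. \<forall>U\<in>nsets H r. f q U = g q"
proof -
  have "finite (Q \<rightarrow>\<^sub>E {..<k})" using Q by (intro finite_PiE) auto
  then obtain N :: nat where N: "\<And>v. v \<in> nsets {..<N} r \<rightarrow> Q \<rightarrow>\<^sub>E {..<k} \<Longrightarrow>
      \<exists>H\<in>nsets {..<N} b. \<forall>U\<in>nsets H r. \<forall>U'\<in>nsets H r. v U = v U'"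
    using ramsey_finite_colour_set[where r = r and b = b] by blast
  have "\<exists>H\<in>nsets {..<N} b. \<exists>g\<in>Q \<rightarrow> {..<k}. \<forall>q\<in>Q. \<forall>U\<in>nsets H r. f q U = g q"
    if f: "\<forall>q\<in>Q. \<forall>U\<in>nsets {..<N} r. f q U < k" for f
  proof -
    define v where "v U = restrict (\<lambda>q. f q U) Q" for U
    have "v \<in> nsets {..<N} r \<rightarrow> Q \<rightarrow>\<^sub>E {..<k}" using f unfolding v_def by auto
    then obtain H where H: "H \<in> nsets {..<N} b" and v_eq: "\<forall>U\<in>nsets H r. \<forall>U'\<in>nsets H r. v U = v U'"
      using N by blast
    have "\<exists>g\<in>Q \<rightarrow> {..<k}. \<forall>q\<in>Q. \<forall>U\<in>nsets H r. f q U = g q"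
    proof (cases "nsets H r = {}")
      case True
      then show ?thesis using k by (intro bexI[of _ "\<lambda>_. 0"]) auto
    next
      case False
      then obtain U0 where U0: "U0 \<in> nsets H r" by blast
      have "U0 \<in> nsets {..<N} r" using U0 H nsets_mono unfolding nsets_def by auto
      then have "\<forall>q\<in>Q. \<forall>U\<in>nsets H r. f q U = f q U0"
        using v_eq U0 unfolding v_def by (metis restrict_apply')
      moreover have "(\<lambda>q. f q U0) \<in> Q \<rightarrow> {..<k}" using f \<open>U0 \<in> nsets {..<N} r\<close> by auto
      ultimately show ?thesis by (intro bexI[of _ "\<lambda>q. f q U0"]) auto
    qed
    with H show ?thesis by blast
  qed
  then show ?thesis by (rule that)
qed

section \<open>The blow-up\<close>

lemma length_2_cases:
  assumes "length t = 2"
  obtains a b where "t = [a, b]"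
  using assms by (auto simp: numeral_2_eq_2 length_Suc_conv)

locale ordered_tournament_blowup =
  fixes ar :: "'l \<Rightarrow> nat" and Ts :: "('l, 'a) str" and Esym Ltsym :: 'l
    and prec :: "nat \<Rightarrow> nat \<Rightarrow> bool"
  assumes Esym_neq_Ltsym: "Esym \<noteq> Ltsym" and ar_Esym: "ar Esym = 2" and ar_Ltsym: "ar Ltsym = 2"
    and wf_Ts: "wf_str ar Ts"
    and tournament_Ts: "tournament (fst Ts) (\<lambda>x y. [x, y] \<in> snd Ts Esym)"
    and linear_Ts: "strict_linear_order_on (fst Ts) (\<lambda>x y. [x, y] \<in> snd Ts Ltsym)"
    and linear_prec: "strict_linear_order_on UNIV prec"
begin

abbreviation Bl :: "('l, 'a \<times> nat) str" where
  "Bl \<equiv> blowup Esym Ltsym prec Ts"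

abbreviation lessT :: "'a \<Rightarrow> 'a \<Rightarrow> bool" where
  "lessT x y \<equiv> [x, y] \<in> snd Ts Ltsym"

abbreviation lessB :: "'a \<times> nat \<Rightarrow> 'a \<times> nat \<Rightarrow> bool" where
  "lessB a b \<equiv> [a, b] \<in> snd Bl Ltsym"

lemma fst_Bl: "fst Bl = fst Ts \<times> UNIV"
  unfolding blowup_def by simp

lemma lessB_iff:
  "lessB a b \<longleftrightarrow> fst a \<in> fst Ts \<and> fst b \<in> fst Ts \<and>
     (lessT (fst a) (fst b) \<or> fst a = fst b \<and> prec (snd a) (snd b))"
  unfolding blowup_def using Esym_neq_Ltsym by (cases a; cases b) auto

lemma blowup_rel_iff:
  assumes "R \<noteq> Ltsym" "length t = ar R" "set t \<subseteq> fst Bl"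
  shows "t \<in> snd Bl R \<longleftrightarrow> map fst t \<in> snd Ts R"
proof (cases "R = Esym")
  case True
  then obtain a b where "t = [a, b]" using assms(2) ar_Esym length_2_cases by metis
  then show ?thesis using True assms(3) unfolding blowup_def by (cases a; cases b) auto
next
  case False
  then show ?thesis using assms(1,3) unfolding blowup_def by simp
qed

lemma wf_Bl: "wf_str ar Bl"
  unfolding wf_str_def
proof (intro allI ballI)
  fix R t assume t: "t \<in> snd Bl R"
  show "length t = ar R \<and> set t \<subseteq> fst Bl"
  proof (cases "R = Esym \<or> R = Ltsym")
    case True
    then obtain a b where "t = [a, b]" "fst a \<in> fst Ts" "fst b \<in> fst Ts"
      using t Esym_neq_Ltsym unfolding blowup_def by auto
    then show ?thesis using True ar_Esym ar_Ltsym by (auto simp: fst_Bl mem_Times_iff)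
  next
    case False
    then have "set t \<subseteq> fst Bl" "map fst t \<in> snd Ts R" using t unfolding blowup_def by auto
    moreover have "length (map fst t) = ar R" using wf_Ts calculation(2) unfolding wf_str_def by blast
    ultimately show ?thesis by simp
  qed
qed

lemma lessT_irrefl: "\<not> lessT x x"
proof
  assume x: "lessT x x"
  then have "x \<in> fst Ts" using wf_Ts unfolding wf_str_def by fastforce
  then show False using strict_linear_order_on_irrefl[OF linear_Ts] x by blast
qed

lemma lessB_trans:
  assumes ab: "lessB a b" and bc: "lessB b c"
  shows "lessB a c"
proof -
  have T: "fst a \<in> fst Ts" "fst b \<in> fst Ts" "fst c \<in> fst Ts"
    using ab bc by (simp_all add: lessB_iff)
  note transT = strict_linear_order_on_trans[OF linear_Ts T]
  note transP = strict_linear_order_on_trans[OF linear_prec UNIV_I UNIV_I UNIV_I]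
  have "lessT (fst a) (fst c) \<or> fst a = fst c \<and> prec (snd a) (snd c)"
  proof (cases "lessT (fst a) (fst b)")
    case True
    then show ?thesis using bc transT by (auto simp: lessB_iff)
  next
    case False
    then have "fst a = fst b" "prec (snd a) (snd b)" using ab by (simp_all add: lessB_iff)
    then show ?thesis using bc transP by (auto simp: lessB_iff)
  qed
  then show ?thesis using T by (simp add: lessB_iff)
qed

lemma linear_Bl: "strict_linear_order_on (fst Bl) lessB"
  unfolding strict_linear_order_on_def
proof (intro conjI ballI impI)
  fix a :: "'a \<times> nat"
  show "\<not> lessB a a"
    using lessT_irrefl strict_linear_order_on_irrefl[OF linear_prec UNIV_I] by (simp add: lessB_iff)
next
  fix a b c :: "'a \<times> nat"
  assume "lessB a b \<and> lessB b c"
  then show "lessB a c" using lessB_trans by blast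
next
  fix a b :: "'a \<times> nat" assume ab: "a \<in> fst Bl" "b \<in> fst Bl" "a \<noteq> b"
  then have T: "fst a \<in> fst Ts" "fst b \<in> fst Ts" by (auto simp: fst_Bl)
  show "lessB a b \<or> lessB b a"
  proof (cases rule: strict_linear_order_on_cases[OF linear_Ts T])
    case 2
    then have "snd a \<noteq> snd b" using ab(3) by (simp add: prod_eq_iff)
    then show ?thesis
      using 2 T strict_linear_order_on_cases[OF linear_prec UNIV_I UNIV_I, of "snd a" "snd b"]
      by (metis lessB_iff)
  qed (use T in \<open>simp_all add: lessB_iff\<close>)
qed

lemma lessB_iff_lessT:
  "a \<in> fst Bl \<Longrightarrow> b \<in> fst Bl \<Longrightarrow> fst a \<noteq> fst b \<Longrightarrow> lessB a b \<longleftrightarrow> lessT (fst a) (fst b)"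
  by (auto simp: lessB_iff fst_Bl)

lemma fst_eq_iff_no_edge:
  assumes "a \<in> fst Bl" "b \<in> fst Bl" "a \<noteq> b"
  shows "fst a = fst b \<longleftrightarrow> [a, b] \<notin> snd Bl Esym \<and> [b, a] \<notin> snd Bl Esym"
proof -
  have E: "[x, y] \<in> snd Bl Esym \<longleftrightarrow> [fst x, fst y] \<in> snd Ts Esym" if "x \<in> fst Bl" "y \<in> fst Bl" for x y
    using blowup_rel_iff[OF Esym_neq_Ltsym, of "[x, y]"] ar_Esym that by simp
  have "fst a \<in> fst Ts" "fst b \<in> fst Ts" using assms(1,2) fst_Bl by auto
  moreover have "[x, x] \<notin> snd Ts Esym" if "x \<in> fst Ts" for x
    using tournament_Ts that unfolding tournament_def by blast
  moreover have "[x, y] \<in> snd Ts Esym \<longleftrightarrow> [y, x] \<notin> snd Ts Esym"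
    if "x \<in> fst Ts" "y \<in> fst Ts" "x \<noteq> y" for x y
    using tournament_Ts that unfolding tournament_def by blast
  ultimately have "fst a = fst b \<longleftrightarrow> [fst a, fst b] \<notin> snd Ts Esym \<and> [fst b, fst a] \<notin> snd Ts Esym"
    by metis
  then show ?thesis using E assms(1,2) by simp
qed

section \<open>Spread copies\<close>

lemma blowup_embedding_intro:
  assumes S: "S \<subseteq> fst Bl" and inj: "inj_on e S" and eS: "e ` S \<subseteq> fst Bl"
    and \<phi>: "is_embedding ar \<phi> (induced Ts (fst ` S)) (induced Ts P)"
    and fst_e: "\<And>s. s \<in> S \<Longrightarrow> fst (e s) = \<phi> (fst s)"
    and less: "\<And>a b. a \<in> S \<Longrightarrow> b \<in> S \<Longrightarrow> lessB a b \<longleftrightarrow> lessB (e a) (e b)"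
  shows "is_embedding ar e (induced Bl S) (induced Bl (e ` S))"
proof (rule is_embedding_induced_intro[OF inj subset_refl])
  fix R t assume t: "length t = ar R" "set t \<subseteq> S"
  show "t \<in> snd Bl R \<longleftrightarrow> map e t \<in> snd Bl R"
  proof (cases "R = Ltsym")
    case True
    then obtain a b where "t = [a, b]" using t(1) ar_Ltsym length_2_cases by metis
    with True t(2) less show ?thesis by simp
  next
    case False
    have "set (map e t) \<subseteq> fst Bl" using t(2) eS by auto
    then have "map e t \<in> snd Bl R \<longleftrightarrow> map fst (map e t) \<in> snd Ts R"
      using blowup_rel_iff[OF False, of "map e t"] t(1) by simp
    also have "map fst (map e t) = map \<phi> (map fst t)" using t(2) fst_e by (induct t) auto
    also have "map \<phi> (map fst t) \<in> snd Ts R \<longleftrightarrow> map fst t \<in> snd Ts R"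
      using induced_embedding_rel[OF \<phi>, of "map fst t" R] t by auto
    also have "map fst t \<in> snd Ts R \<longleftrightarrow> t \<in> snd Bl R"
      using blowup_rel_iff[OF False t(1)] t(2) S by auto
    finally show ?thesis by simp
  qed
qed

text \<open>The copy of S over a given copy of its projection and a given set U of indices, with
  |U| = |S|: the k-th point of S in the order of the blow-up goes to the k-th index of U.\<close>

definition spread :: "('a \<times> nat) set \<Rightarrow> ('a \<Rightarrow> 'a) \<Rightarrow> nat set \<Rightarrow> 'a \<times> nat \<Rightarrow> 'a \<times> nat" where
  "spread S \<phi> U s = (\<phi> (fst s), ord_nth prec U (rank lessB S s))"

lemma spread_less_iff:
  assumes S: "S \<subseteq> fst Bl" "finite S" and U: "finite U" "card U = card S"
    and ab: "a \<in> S" "b \<in> S"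
  shows "prec (snd (spread S \<phi> U a)) (snd (spread S \<phi> U b)) \<longleftrightarrow> lessB a b"
proof -
  have linS: "strict_linear_order_on S lessB" by (rule strict_linear_order_on_subset[OF linear_Bl S(1)])
  have linU: "strict_linear_order_on U prec" by (rule strict_linear_order_on_subset[OF linear_prec]) simp
  have r: "rank lessB S s < card U" if "s \<in> S" for s
    using rank_less_card[OF linS S(2) that] U(2) by simp
  have "prec (snd (spread S \<phi> U a)) (snd (spread S \<phi> U b)) \<longleftrightarrow> rank lessB S a < rank lessB S b"
    unfolding spread_def using ord_nth_less_iff[OF linU U(1) r[OF ab(1)] r[OF ab(2)]] by simp
  also have "\<dots> \<longleftrightarrow> lessB a b" by (rule rank_less_iff[OF linS S(2) ab])
  finally show ?thesis .
qed

lemma spread_mem: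
  assumes S: "S \<subseteq> fst Bl" "finite S" and U: "finite U" "card U = card S" and s: "s \<in> S"
  shows "spread S \<phi> U s \<in> \<phi> ` fst ` S \<times> U"
proof -
  have linS: "strict_linear_order_on S lessB" by (rule strict_linear_order_on_subset[OF linear_Bl S(1)])
  have linU: "strict_linear_order_on U prec" by (rule strict_linear_order_on_subset[OF linear_prec]) simp
  have "rank lessB S s < card U" using rank_less_card[OF linS S(2) s] U(2) by simp
  then show ?thesis using ord_nth_in[OF linU U(1)] s unfolding spread_def by auto
qed

lemma spread_image_subset:
  assumes S: "S \<subseteq> fst Bl" "finite S" and U: "finite U" "card U = card S" and \<phi>: "\<phi> ` fst ` S \<subseteq> P"
  shows "spread S \<phi> U ` S \<subseteq> P \<times> U"
proof (rule image_subsetI)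
  fix s assume "s \<in> S"
  then have "spread S \<phi> U s \<in> \<phi> ` fst ` S \<times> U" by (rule spread_mem[OF S U])
  then show "spread S \<phi> U s \<in> P \<times> U" using \<phi> by (auto simp: mem_Times_iff)
qed

lemma inj_on_spread:
  assumes S: "S \<subseteq> fst Bl" "finite S" and U: "finite U" "card U = card S"
  shows "inj_on (spread S \<phi> U) S"
proof (rule inj_onI)
  fix a b assume ab: "a \<in> S" "b \<in> S" "spread S \<phi> U a = spread S \<phi> U b"
  then have "\<not> lessB a b" "\<not> lessB b a"
    using spread_less_iff[OF S U ab(1,2), of \<phi>] spread_less_iff[OF S U ab(2,1), of \<phi>]
      strict_linear_order_on_irrefl[OF linear_prec UNIV_I]
    by auto
  then show "a = b" using strict_linear_order_on_cases[OF linear_Bl, of a b] ab(1,2) S(1) by blast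
qed

lemma spread_embedding:
  assumes S: "S \<subseteq> fst Bl" "finite S" and U: "finite U" "card U = card S"
    and \<phi>: "is_embedding ar \<phi> (induced Ts (fst ` S)) (induced Ts P)" and P: "P \<subseteq> fst Ts"
  shows "is_embedding ar (spread S \<phi> U) (induced Bl S) (induced Bl (spread S \<phi> U ` S))"
proof (rule blowup_embedding_intro[OF S(1) inj_on_spread[OF S U] _ \<phi>])
  let ?e = "spread S \<phi> U"
  have fst_e: "fst (?e s) \<in> fst Ts" if "s \<in> S" for s
    using is_embedding_image_subset[OF \<phi>] P that unfolding spread_def by auto
  show eS: "?e ` S \<subseteq> fst Bl"
  proof (rule image_subsetI)
    fix s assume "s \<in> S"
    then show "?e s \<in> fst Bl" using fst_e[of s] by (simp add: fst_Bl mem_Times_iff)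
  qed
  show "fst (?e s) = \<phi> (fst s)" for s unfolding spread_def by simp
  have mono: "lessB (?e a) (?e b)" if ab: "a \<in> S" "b \<in> S" and ab_less: "lessB a b" for a b
  proof -
    have "lessT (fst a) (fst b) \<or> fst a = fst b" using ab_less unfolding lessB_iff by blast
    moreover have "lessT (\<phi> (fst a)) (\<phi> (fst b))" if "lessT (fst a) (fst b)"
      using induced_embedding_rel[OF \<phi>, of "[fst a, fst b]" Ltsym] ar_Ltsym ab that by simp
    moreover have "prec (snd (?e a)) (snd (?e b))" using spread_less_iff[OF S U ab] ab_less by simp
    ultimately have "lessT (fst (?e a)) (fst (?e b)) \<or>
        fst (?e a) = fst (?e b) \<and> prec (snd (?e a)) (snd (?e b))"
      unfolding spread_def by auto
    then show ?thesis using fst_e[OF ab(1)] fst_e[OF ab(2)] by (simp only: lessB_iff)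
  qed
  show "lessB a b \<longleftrightarrow> lessB (?e a) (?e b)" if "a \<in> S" "b \<in> S" for a b
    using strict_linear_order_on_mono_iff[OF strict_linear_order_on_subset[OF linear_Bl S(1)]
        linear_Bl eS mono that] by simp
qed

lemma blowup_embedding_fst_eq_iff:
  assumes S: "S \<subseteq> fst Bl" and S': "S' \<subseteq> fst Bl"
    and \<psi>: "is_embedding ar \<psi> (induced Bl S) (induced Bl S')" and ab: "a \<in> S" "b \<in> S"
  shows "fst (\<psi> a) = fst (\<psi> b) \<longleftrightarrow> fst a = fst b"
proof (cases "a = b")
  case False
  have \<psi>S: "\<psi> a \<in> S'" "\<psi> b \<in> S'" using \<psi> ab unfolding is_embedding_def by auto
  have "\<psi> a \<noteq> \<psi> b" using False ab is_embedding_inj_on[OF \<psi>] by (auto dest: inj_onD)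
  moreover have "[x, y] \<in> snd Bl Esym \<longleftrightarrow> [\<psi> x, \<psi> y] \<in> snd Bl Esym" if "x \<in> S" "y \<in> S" for x y
    using induced_embedding_rel[OF \<psi>, of "[x, y]" Esym] ar_Esym that by simp
  ultimately show ?thesis
    using fst_eq_iff_no_edge[of a b] fst_eq_iff_no_edge[of "\<psi> a" "\<psi> b"] False ab \<psi>S S S' by blast
qed simp

lemma blowup_embedding_lessT_iff:
  assumes S: "S \<subseteq> fst Bl" and S': "S' \<subseteq> fst Bl"
    and \<psi>: "is_embedding ar \<psi> (induced Bl S) (induced Bl S')" and ab: "a \<in> S" "b \<in> S"
  shows "lessT (fst (\<psi> a)) (fst (\<psi> b)) \<longleftrightarrow> lessT (fst a) (fst b)"
proof (cases "fst a = fst b")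
  case True
  then show ?thesis using blowup_embedding_fst_eq_iff[OF S S' \<psi> ab] lessT_irrefl by simp
next
  case False
  have "\<psi> a \<in> fst Bl" "\<psi> b \<in> fst Bl" using is_embedding_image_subset[OF \<psi>] ab S' by auto
  moreover have "fst (\<psi> a) \<noteq> fst (\<psi> b)" using False blowup_embedding_fst_eq_iff[OF S S' \<psi> ab] by simp
  ultimately have "lessB (\<psi> a) (\<psi> b) \<longleftrightarrow> lessT (fst (\<psi> a)) (fst (\<psi> b))" by (rule lessB_iff_lessT)
  moreover have "lessB a b \<longleftrightarrow> lessT (fst a) (fst b)" using ab S False by (intro lessB_iff_lessT) auto
  moreover have "lessB a b \<longleftrightarrow> lessB (\<psi> a) (\<psi> b)"
    using induced_embedding_rel[OF \<psi>, of "[a, b]" Ltsym] ar_Ltsym ab by simp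
  ultimately show ?thesis by simp
qed

lemma blowup_embedding_project:
  assumes S: "S \<subseteq> fst Bl" and S': "S' \<subseteq> fst Bl"
    and \<psi>: "is_embedding ar \<psi> (induced Bl S) (induced Bl S')" "\<psi> ` S = S'"
    and \<phi>: "\<And>s. s \<in> S \<Longrightarrow> \<phi> (fst s) = fst (\<psi> s)"
  shows "is_embedding ar \<phi> (induced Ts (fst ` S)) (induced Ts (fst ` S'))"
proof (rule is_embedding_induced_intro)
  note fst_eq = blowup_embedding_fst_eq_iff[OF S S' \<psi>(1)]
  show "inj_on \<phi> (fst ` S)"
  proof (rule inj_onI)
    fix x y assume "x \<in> fst ` S" "y \<in> fst ` S" and xy: "\<phi> x = \<phi> y"
    then obtain a b where ab: "a \<in> S" "b \<in> S" "x = fst a" "y = fst b" by blast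
    then have "fst (\<psi> a) = fst (\<psi> b)" using xy \<phi> by simp
    then show "x = y" using fst_eq[OF ab(1,2)] ab(3,4) by simp
  qed
  have "\<phi> ` fst ` S = fst ` S'" unfolding \<psi>(2)[symmetric] image_image using \<phi> by simp
  then show "\<phi> ` fst ` S \<subseteq> fst ` S'" by simp
  fix R t assume t: "length t = ar R" "set t \<subseteq> fst ` S"
  then have "t \<in> map fst ` lists S" unfolding lists_image[symmetric] by auto
  then obtain t' where t': "set t' \<subseteq> S" "t = map fst t'" by auto
  have \<phi>t: "map \<phi> t = map fst (map \<psi> t')"
    unfolding t'(2) map_map by (rule map_cong[OF refl]) (use t'(1) \<phi> in auto)
  have \<psi>t': "t' \<in> snd Bl R \<longleftrightarrow> map \<psi> t' \<in> snd Bl R"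
    using induced_embedding_rel[OF \<psi>(1)] t(1) t' by simp
  have mem: "set t' \<subseteq> fst Bl" "set (map \<psi> t') \<subseteq> fst Bl" using t'(1) S S' \<psi>(2) by auto
  show "t \<in> snd Ts R \<longleftrightarrow> map \<phi> t \<in> snd Ts R"
  proof (cases "R = Ltsym")
    case False
    have "t \<in> snd Ts R \<longleftrightarrow> t' \<in> snd Bl R"
      using blowup_rel_iff[OF False, of t'] mem(1) t(1) t'(2) by simp
    also have "\<dots> \<longleftrightarrow> map \<psi> t' \<in> snd Bl R" by (rule \<psi>t')
    also have "\<dots> \<longleftrightarrow> map \<phi> t \<in> snd Ts R"
      unfolding \<phi>t using blowup_rel_iff[OF False, of "map \<psi> t'"] mem(2) t(1) t'(2) by simp
    finally show ?thesis .
  next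
    case True
    then obtain a b where ab: "t' = [a, b]" using t(1) t'(2) ar_Ltsym length_2_cases by (metis length_map)
    then show ?thesis
      using blowup_embedding_lessT_iff[OF S S' \<psi>(1), of a b] t'(1) t'(2) \<phi>t True by simp
  qed
qed

definition sorted_copy :: "('a \<times> nat) set \<Rightarrow> bool" where
  "sorted_copy S' \<longleftrightarrow> (\<forall>a\<in>S'. \<forall>b\<in>S'. lessB a b \<longrightarrow> prec (snd a) (snd b))"

lemma sorted_copy_less_iff:
  assumes "S' \<subseteq> fst Bl" "sorted_copy S'" "a \<in> S'" "b \<in> S'"
  shows "prec (snd a) (snd b) \<longleftrightarrow> lessB a b"
  using strict_linear_order_on_mono_iff[OF strict_linear_order_on_subset[OF linear_Bl assms(1)]
      linear_prec _ _ assms(3,4), of snd] assms(2)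
  unfolding sorted_copy_def by blast

lemma sorted_copy_inj_on_snd:
  assumes S': "S' \<subseteq> fst Bl" "sorted_copy S'"
  shows "inj_on snd S'"
proof (rule inj_onI)
  fix a b assume ab: "a \<in> S'" "b \<in> S'" "snd a = snd b"
  then have "\<not> lessB a b" "\<not> lessB b a"
    using sorted_copy_less_iff[OF S'] strict_linear_order_on_irrefl[OF linear_prec UNIV_I] by metis+
  then show "a = b" using strict_linear_order_on_cases[OF linear_Bl, of a b] ab(1,2) S'(1) by blast
qed

lemma sorted_copy_spread:
  assumes S: "S \<subseteq> fst Bl" "finite S" and U: "finite U" "card U = card S"
    and \<phi>: "is_embedding ar \<phi> (induced Ts (fst ` S)) (induced Ts P)" and P: "P \<subseteq> fst Ts"
  shows "sorted_copy (spread S \<phi> U ` S)"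
  unfolding sorted_copy_def
proof (intro ballI impI)
  fix a b assume "a \<in> spread S \<phi> U ` S" "b \<in> spread S \<phi> U ` S" and ab: "lessB a b"
  then obtain a0 b0 where "a0 \<in> S" "b0 \<in> S" "a = spread S \<phi> U a0" "b = spread S \<phi> U b0" by blast
  then show "prec (snd a) (snd b)"
    using ab spread_less_iff[OF S U] induced_embedding_rel[OF spread_embedding[OF S U \<phi> P], of "[a0, b0]" Ltsym]
      ar_Ltsym by simp
qed

text \<open>Blocks are preserved, so the isomorphism induces a map on first coordinates;
  sortedness forces the second coordinates.\<close>

lemma sorted_copy_eq_spread:
  assumes S: "S \<subseteq> fst Bl" "finite S" and S': "S' \<subseteq> fst Bl" "sorted_copy S'"
    and \<psi>: "is_embedding ar \<psi> (induced Bl S) (induced Bl S')" "\<psi> ` S = S'"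
  obtains \<phi> where "is_embedding ar \<phi> (induced Ts (fst ` S)) (induced Ts (fst ` S'))"
    "\<phi> ` fst ` S = fst ` S'" "S' = spread S \<phi> (snd ` S') ` S"
proof -
  define \<phi> where "\<phi> x = fst (\<psi> (SOME s. s \<in> S \<and> fst s = x))" for x
  have \<phi>: "\<phi> (fst s) = fst (\<psi> s)" if "s \<in> S" for s
  proof -
    have "(SOME s'. s' \<in> S \<and> fst s' = fst s) \<in> S \<and> fst (SOME s'. s' \<in> S \<and> fst s' = fst s) = fst s"
      by (rule someI[where x = s]) (simp add: that)
    then show ?thesis
      unfolding \<phi>_def using blowup_embedding_fst_eq_iff[OF S(1) S'(1) \<psi>(1)] that by blast
  qed
  have "\<phi> ` fst ` S = fst ` S'" unfolding \<psi>(2)[symmetric] image_image using \<phi> by simp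
  moreover have "\<psi> s = spread S \<phi> (snd ` S') s" if "s \<in> S" for s
  proof -
    have lin: "strict_linear_order_on (snd ` S') prec"
      by (rule strict_linear_order_on_subset[OF linear_prec]) simp
    have "finite (snd ` S')" using \<psi>(2) S(2) by blast
    moreover have "rank lessB S' (\<psi> s) = rank lessB S s"
      using rank_image_eq[OF is_embedding_inj_on[OF \<psi>(1), simplified] that, of lessB lessB] \<psi>(2)
        induced_embedding_rel[OF \<psi>(1), of "[_, s]" Ltsym] ar_Ltsym that by simp
    moreover have "rank prec (snd ` S') (snd (\<psi> s)) = rank lessB S' (\<psi> s)"
      using rank_image_eq[OF sorted_copy_inj_on_snd[OF S'], of "\<psi> s" lessB prec]
        sorted_copy_less_iff[OF S'] \<psi>(2) that by blast
    ultimately have "snd (\<psi> s) = ord_nth prec (snd ` S') (rank lessB S s)"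
      using ord_nth_rank[OF lin, of "snd (\<psi> s)"] \<psi>(2) that by auto
    then show ?thesis using \<phi>[OF that] unfolding spread_def by (simp add: prod_eq_iff)
  qed
  then have "S' = spread S \<phi> (snd ` S') ` S" using \<psi>(2) by auto
  ultimately show ?thesis using that blowup_embedding_project[OF S(1) S'(1) \<psi> \<phi>] by blast
qed

definition copy_over :: "('a \<times> nat) set \<Rightarrow> 'a set \<Rightarrow> nat set \<Rightarrow> ('a \<times> nat) set" where
  "copy_over S q U = spread S (some_iso ar (induced Ts (fst ` S)) (induced Ts q)) U ` S"

lemma copies_in_spread:
  assumes SA: "SA \<subseteq> fst Bl" "finite SA" and SB: "SB \<subseteq> fst Bl" "finite SB"
    and H: "finite H" "card H = card SB"
    and \<psi>: "is_embedding ar \<psi> (induced Ts (fst ` SB)) (induced Ts Q)" and Q: "Q \<subseteq> fst Ts"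
    and S': "S' \<subseteq> spread SB \<psi> H ` SB" "isomorphic ar (induced Bl SA) (induced Bl S')"
  shows "isomorphic ar (induced Ts (fst ` SA)) (induced Ts (fst ` S'))"
    and "fst ` S' \<subseteq> Q" and "snd ` S' \<in> nsets H (card SA)"
    and "S' = copy_over SA (fst ` S') (snd ` S')"
proof -
  have "spread SB \<psi> H ` SB \<subseteq> Q \<times> H"
    using spread_image_subset[OF SB H is_embedding_image_subset[OF \<psi>, simplified]] .
  then have S'QH: "S' \<subseteq> Q \<times> H" using S'(1) by blast
  then show "fst ` S' \<subseteq> Q" by auto
  have S'Bl: "S' \<subseteq> fst Bl" using S'QH Q unfolding fst_Bl by blast
  have sorted: "sorted_copy S'"
    using sorted_copy_spread[OF SB H \<psi> Q] S'(1) unfolding sorted_copy_def by (meson subsetD)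
  obtain \<psi>A where \<psi>A: "is_embedding ar \<psi>A (induced Bl SA) (induced Bl S')" "\<psi>A ` SA = S'"
    using S'(2) unfolding isomorphic_def by auto
  obtain \<phi>' where \<phi>': "is_embedding ar \<phi>' (induced Ts (fst ` SA)) (induced Ts (fst ` S'))"
    "\<phi>' ` fst ` SA = fst ` S'" "S' = spread SA \<phi>' (snd ` S') ` SA"
    using sorted_copy_eq_spread[OF SA S'Bl sorted \<psi>A] by blast
  show "isomorphic ar (induced Ts (fst ` SA)) (induced Ts (fst ` S'))"
    using \<phi>'(1,2) unfolding isomorphic_def by auto
  have "card (snd ` S') = card SA"
    using card_image[OF sorted_copy_inj_on_snd[OF S'Bl sorted]] card_image[OF is_embedding_inj_on[OF \<psi>A(1)]] \<psi>A(2)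
    by simp
  moreover have "snd ` S' \<subseteq> H" using S'QH by auto
  ultimately show "snd ` S' \<in> nsets H (card SA)" by (simp add: nsets_def finite_subset[OF _ H(1)])
  let ?\<phi> = "some_iso ar (induced Ts (fst ` SA)) (induced Ts (fst ` S'))"
  have \<phi>: "is_embedding ar ?\<phi> (induced Ts (fst ` SA)) (induced Ts (fst ` S'))" "?\<phi> ` fst ` SA = fst ` S'"
    using some_iso[OF \<open>isomorphic ar (induced Ts (fst ` SA)) (induced Ts (fst ` S'))\<close>] by simp_all
  have PA: "fst ` SA \<subseteq> fst Ts" "finite (fst ` SA)" using SA by (auto simp: fst_Bl)
  have "fst ` S' \<subseteq> fst Ts" using S'Bl by (auto simp: fst_Bl)
  then have "?\<phi> x = \<phi>' x" if "x \<in> fst ` SA" for x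
    using induced_isomorphism_unique[OF linear_Ts ar_Ltsym PA _ \<phi> \<phi>'(1,2) that] by blast
  then have "spread SA ?\<phi> (snd ` S') ` SA = spread SA \<phi>' (snd ` S') ` SA"
    unfolding spread_def by (intro image_cong) auto
  then show "S' = copy_over SA (fst ` S') (snd ` S')"
    unfolding copy_over_def by (rule trans[OF \<phi>'(3) sym])
qed

section \<open>The Ramsey property of the blow-up\<close>

lemma spread_in_copies:
  assumes S: "S \<subseteq> fst Bl" "finite S" and U: "finite U" "card U = card S"
    and \<phi>: "is_embedding ar \<phi> (induced Ts (fst ` S)) (induced Ts P)" "\<phi> ` fst ` S = P" and P: "P \<subseteq> fst Ts"
    and W: "P \<times> U \<subseteq> W" "W \<subseteq> fst Bl"
  shows "spread S \<phi> U ` S \<in> copies ar (induced Bl W) (induced Bl S)"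
proof -
  have "spread S \<phi> U ` S \<subseteq> W" using spread_image_subset[OF S U] \<phi>(2) W(1) by blast
  moreover have "isomorphic ar (induced Bl S) (induced Bl (spread S \<phi> U ` S))"
    using spread_embedding[OF S U \<phi>(1) P] unfolding isomorphic_def by auto
  ultimately show ?thesis unfolding copies_induced[OF W(2)] by blast
qed

lemma copy_over_in_copies:
  assumes SA: "SA \<subseteq> fst Bl" "finite SA" and PC: "PC \<subseteq> fst Ts"
    and q: "q \<in> copies ar (induced Ts PC) (induced Ts (fst ` SA))" and U: "U \<in> nsets X (card SA)"
  shows "copy_over SA q U \<in> copies ar (induced Bl (PC \<times> X)) (induced Bl SA)"
proof -
  have q': "q \<subseteq> PC" "isomorphic ar (induced Ts (fst ` SA)) (induced Ts q)"
    using q unfolding copies_induced[OF PC] by auto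
  have U': "finite U" "card U = card SA" "U \<subseteq> X" using U unfolding nsets_def by auto
  have "q \<times> U \<subseteq> PC \<times> X" "PC \<times> X \<subseteq> fst Bl" using q'(1) U'(3) PC by (auto simp: fst_Bl)
  then show ?thesis
    using spread_in_copies[OF SA U'(1,2) conjunct1[OF some_iso[OF q'(2)]] _ order_trans[OF q'(1) PC]]
      some_iso[OF q'(2)]
    unfolding copy_over_def by simp
qed

lemma monochromatic_spread_copy:
  assumes SA: "SA \<subseteq> fst Bl" "finite SA" and SB: "SB \<subseteq> fst Bl" "finite SB"
    and P: "P \<subseteq> fst Ts" and Q: "Q \<in> copies ar (induced Ts P) (induced Ts (fst ` SB))"
    and H: "H \<in> nsets X (card SB)"
    and mono: "\<And>q U. q \<subseteq> Q \<Longrightarrow> isomorphic ar (induced Ts (fst ` SA)) (induced Ts q) \<Longrightarrow>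
      U \<in> nsets H (card SA) \<Longrightarrow> c (copy_over SA q U) = i"
  obtains B' where "B' \<in> copies ar (induced Bl (P \<times> X)) (induced Bl SB)"
    "\<forall>S\<in>copies ar (induced (induced Bl (P \<times> X)) B') (induced Bl SA). c S = i"
proof -
  have Q': "Q \<subseteq> P" "isomorphic ar (induced Ts (fst ` SB)) (induced Ts Q)"
    using Q unfolding copies_induced[OF P] by auto
  then obtain \<psi> where \<psi>: "is_embedding ar \<psi> (induced Ts (fst ` SB)) (induced Ts Q)" "\<psi> ` fst ` SB = Q"
    unfolding isomorphic_def by auto
  have H': "finite H" "card H = card SB" "H \<subseteq> X" using H unfolding nsets_def by auto
  have QT: "Q \<subseteq> fst Ts" using Q'(1) P by blast
  have W: "Q \<times> H \<subseteq> P \<times> X" "P \<times> X \<subseteq> fst Bl" using Q'(1) H'(3) P by (auto simp: fst_Bl)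
  then have B': "spread SB \<psi> H ` SB \<in> copies ar (induced Bl (P \<times> X)) (induced Bl SB)"
    by (intro spread_in_copies[OF SB H'(1,2) \<psi> QT])
  then have B'W: "spread SB \<psi> H ` SB \<subseteq> P \<times> X" unfolding copies_induced[OF W(2)] by blast
  have "c S' = i" if "S' \<in> copies ar (induced (induced Bl (P \<times> X)) (spread SB \<psi> H ` SB)) (induced Bl SA)"
    for S'
  proof -
    have S': "S' \<subseteq> spread SB \<psi> H ` SB" "isomorphic ar (induced Bl SA) (induced Bl S')"
      using that B'W W(2) unfolding copies_def by (auto simp: induced_induced)
    note S'_props = copies_in_spread[OF SA SB H'(1,2) \<psi>(1) QT S']
    show ?thesis using mono[OF S'_props(2,1,3)] S'_props(4) by simp
  qed
  then have "\<forall>S\<in>copies ar (induced (induced Bl (P \<times> X)) (spread SB \<psi> H ` SB)) (induced Bl SA). c S = i"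
    by blast
  with B' show ?thesis by (rule that)
qed

lemma arrows_blowup_grid:
  fixes k :: nat
  assumes k: "0 < k" and SA: "SA \<subseteq> fst Bl" "finite SA" and SB: "SB \<subseteq> fst Bl" "finite SB"
    and PC: "PC \<subseteq> fst Ts" "finite PC"
    and arr: "arrows ar (induced Ts PC) (induced Ts (fst ` SB)) (induced Ts (fst ` SA)) k"
  obtains N where "arrows ar (induced Bl (PC \<times> {..<N})) (induced Bl SB) (induced Bl SA) k"
proof -
  define Q where "Q = copies ar (induced Ts PC) (induced Ts (fst ` SA))"
  have "finite Q" unfolding Q_def copies_induced[OF PC(1)] using PC(2) by simp
  then obtain N :: nat where N: "\<And>f. \<forall>q\<in>Q. \<forall>U\<in>nsets {..<N} (card SA). f q U < k \<Longrightarrow>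
      \<exists>H\<in>nsets {..<N} (card SB). \<exists>g\<in>Q \<rightarrow> {..<k}. \<forall>q\<in>Q. \<forall>U\<in>nsets H (card SA). f q U = g q"
    using finite_ramsey_parametrised[OF _ k, where r = "card SA" and b = "card SB"] by blast
  have "arrows ar (induced Bl (PC \<times> {..<N})) (induced Bl SB) (induced Bl SA) k"
    unfolding arrows_def
  proof (intro allI impI)
    fix c :: "('a \<times> nat) set \<Rightarrow> nat"
    assume "\<forall>S\<in>copies ar (induced Bl (PC \<times> {..<N})) (induced Bl SA). c S < k"
    then have "\<forall>q\<in>Q. \<forall>U\<in>nsets {..<N} (card SA). c (copy_over SA q U) < k"
      using copy_over_in_copies[OF SA PC(1)] unfolding Q_def by blast
    then obtain H g where H: "H \<in> nsets {..<N} (card SB)" and g: "g \<in> Q \<rightarrow> {..<k}"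
      and hom: "\<forall>q\<in>Q. \<forall>U\<in>nsets H (card SA). c (copy_over SA q U) = g q"
      using N[of "\<lambda>q U. c (copy_over SA q U)"] by blast
    obtain qB i where qB: "qB \<in> copies ar (induced Ts PC) (induced Ts (fst ` SB))"
      and mono: "\<forall>q\<in>copies ar (induced (induced Ts PC) qB) (induced Ts (fst ` SA)). g q = i"
      using arrowsE[OF arr, of g] g unfolding Q_def by blast
    have qB_PC: "qB \<subseteq> PC" using qB unfolding copies_induced[OF PC(1)] by blast
    have "c (copy_over SA q U) = i"
      if "q \<subseteq> qB" "isomorphic ar (induced Ts (fst ` SA)) (induced Ts q)" "U \<in> nsets H (card SA)" for q U
    proof -
      have "q \<in> Q" unfolding Q_def copies_induced[OF PC(1)] using that(1,2) qB_PC by blast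
      moreover have "q \<in> copies ar (induced (induced Ts PC) qB) (induced Ts (fst ` SA))"
        unfolding induced_induced[OF qB_PC] copies_induced[OF order_trans[OF qB_PC PC(1)]]
        using that(1,2) by blast
      ultimately show ?thesis using hom that(3) mono by simp
    qed
    then obtain B' where "B' \<in> copies ar (induced Bl (PC \<times> {..<N})) (induced Bl SB)"
      "\<forall>S\<in>copies ar (induced (induced Bl (PC \<times> {..<N})) B') (induced Bl SA). c S = i"
      by (rule monochromatic_spread_copy[OF SA SB PC(1) qB H])
    then show "\<exists>B'\<in>copies ar (induced Bl (PC \<times> {..<N})) (induced Bl SB).
        \<exists>i. \<forall>S\<in>copies ar (induced (induced Bl (PC \<times> {..<N})) B') (induced Bl SA). c S = i"
      by blast
  qed
  then show ?thesis by (rule that)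
qed

theorem ramsey_class_blowup:
  assumes ram: "ramsey_class ar (age ar Ts)"
  shows "ramsey_class ar (age ar Bl)"
  unfolding ramsey_class_def
proof (intro allI impI ballI)
  fix k :: nat and A B
  assume k: "1 \<le> k" and A: "A \<in> age ar Bl" and B: "B \<in> age ar Bl"
  obtain SA where SA: "SA \<subseteq> fst Bl" "finite SA" "isomorphic ar A (induced Bl SA)"
    using age_isomorphic_induced[OF A] .
  obtain SB where SB: "SB \<subseteq> fst Bl" "finite SB" "isomorphic ar B (induced Bl SB)"
    using age_isomorphic_induced[OF B] .
  have PA: "finite (fst ` SA)" "fst ` SA \<subseteq> fst Ts" and PB: "finite (fst ` SB)" "fst ` SB \<subseteq> fst Ts"
    using SA(1,2) SB(1,2) by (auto simp: fst_Bl)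
  obtain DA where DA: "DA \<in> age ar Ts" "isomorphic ar DA (induced Ts (fst ` SA))"
    using age_representative[OF wf_Ts PA] by blast
  obtain DB where DB: "DB \<in> age ar Ts" "isomorphic ar DB (induced Ts (fst ` SB))"
    using age_representative[OF wf_Ts PB] by blast
  obtain DC where DC: "DC \<in> age ar Ts" "arrows ar DC DB DA k"
    using ram k DA(1) DB(1) unfolding ramsey_class_def by blast
  obtain PC where PC: "PC \<subseteq> fst Ts" "finite PC" "isomorphic ar DC (induced Ts PC)"
    using age_isomorphic_induced[OF DC(1)] .
  have "arrows ar (induced Ts PC) (induced Ts (fst ` SB)) (induced Ts (fst ` SA)) k"
    using arrows_isomorphic_patterns[OF DA(2) DB(2) arrows_isomorphic[OF PC(3) DC(2)]] .
  moreover have "0 < k" using k by simp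
  ultimately obtain N where N: "arrows ar (induced Bl (PC \<times> {..<N})) (induced Bl SB) (induced Bl SA) k"
    using arrows_blowup_grid[OF _ SA(1,2) SB(1,2) PC(1,2)] by blast
  have "PC \<times> {..<N} \<subseteq> fst Bl" "finite (PC \<times> {..<N})" using PC(1,2) by (auto simp: fst_Bl)
  then obtain C where C: "C \<in> age ar Bl" "isomorphic ar C (induced Bl (PC \<times> {..<N}))"
    using age_representative[OF wf_Bl] by blast
  have "arrows ar C B A k"
    using arrows_isomorphic_patterns[OF isomorphic_sym[OF SA(3)] isomorphic_sym[OF SB(3)]
        arrows_isomorphic[OF isomorphic_sym[OF C(2)] N]] .
  then show "\<exists>C\<in>age ar Bl. arrows ar C B A k" using C(1) by blast
qed

end

text \<open>Countability, infiniteness and homogeneity of the tournament, and the density of the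
  order on the indices, are not needed: the argument only uses that E is a tournament and that
  both orders are linear.\<close>

theorem mainTheorem3:
  fixes ar :: "'l::countable \<Rightarrow> nat"
    and Ts :: "('l, 'a) str"
    and Esym Ltsym :: 'l
    and prec :: "nat \<Rightarrow> nat \<Rightarrow> bool"
  assumes "Esym \<noteq> Ltsym" and "ar Esym = 2" and "ar Ltsym = 2"
    and "wf_str ar Ts"
    and "countable (fst Ts)" and "infinite (fst Ts)"
    and "tournament (fst Ts) (\<lambda>x y. [x, y] \<in> snd Ts Esym)"
    and "homogeneous_digraph (fst Ts) (\<lambda>x y. [x, y] \<in> snd Ts Esym)"
    and "strict_linear_order_on (fst Ts) (\<lambda>x y. [x, y] \<in> snd Ts Ltsym)"
    and "\<exists>h :: nat \<Rightarrow> rat. bij h \<and> (\<forall>i j. prec i j \<longleftrightarrow> h i < h j)"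
    and "ramsey_class ar (age ar Ts)"
  shows "ramsey_class ar (age ar (blowup Esym Ltsym prec Ts))"
proof -
  obtain h :: "nat \<Rightarrow> rat" where h: "inj h" "\<And>i j. prec i j \<longleftrightarrow> h i < h j"
    using assms(10) bij_is_inj by blast
  have "strict_linear_order_on UNIV prec"
    unfolding strict_linear_order_on_def h(2)
  proof (intro conjI ballI impI)
    fix x y :: nat
    assume "x \<noteq> y"
    then have "h x \<noteq> h y" using inj_eq[OF h(1)] by simp
    then show "h x < h y \<or> h y < h x" by (simp add: neq_iff)
  qed auto
  then interpret ordered_tournament_blowup ar Ts Esym Ltsym prec
    using assms(1-4,7,9) by unfold_locales
  show ?thesis by (rule ramsey_class_blowup[OF assms(11)])
qed

end
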